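(* Let $(X_1,\dots,X_M)$ have density $f\in\mathrm{MMEam}$ of the form $f(x_1,\dots,x_M)=\sum_{\mathbf i\in\mathscr S}p_{\mathbf i}f_{i_1}(x_1)\cdots f_{i_M}(x_M)$. Then the density $f_S$ of $S=\sum_{j=1}^MX_j$ belongs to $\mathrm{MEam}$ and is given by $$f_S(y)=\sum_{\mathbf i\in\mathscr S}p_{\mathbf i}\,\alpha_{\mathbf i}e^{T_{\mathbf i}y}t_{\mathbf i},\qquad y\ge0,$$ where $\alpha_{\mathbf i}=(\alpha_{i_1},0,\dots,0)$, $t_{\mathbf i}=(0,\dots,0,t_{i_M}^\top)^\top$, and $T_{\mathbf i}$ is the $M\times M$ block upper bidiagonal matrix with diagonal blocks $T_{i_1},\dots,T_{i_M}$, blocks $t_{i_k}\alpha_{i_{k+1}}$ in position $(k,k+1)$ for $1\le k\le M-1$, and zero blocks elsewhere.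
   Context: An ME density is a probability density on $[0,\infty)$ of the form $g(x)=\alpha e^{Tx}t$ ($\alpha$ real row vector, $T$ real square matrix, $t$ real column vector). $\mathrm{MEam}$ is the class of nonnegative functions $\sum_{k=1}^K c_kg_k$ with $g_k$ ME densities, $c_k\in\mathbb R$, $\sum c_k=1$. MMEam: fix $L,M\in\mathbb N_+$ and ME densities $f_1,\dots,f_L$ with triples $(\alpha_j,T_j,t_j)$. Let $\mathscr S=\{1,\dots,L\}^M$, $\mathbf i=(i_1,\dots,i_M)$, and real numbers $p_{\mathbf i}$ (possibly negative) with $\sum p_{\mathbf i}=1$; $f(x)=\sum_{\mathbf i}p_{\mathbf i}f_{i_1}(x_1)\cdots f_{i_M}(x_M)$ on $[0,\infty)^M$ is an MMEam density if $f\ge0$. *)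

theory Defs
  imports "HOL-Probability.Probability" "Jordan_Normal_Form.Matrix"
begin

definition mexp :: "real mat \<Rightarrow> real mat" where
  "mexp A = Matrix.mat (dim_row A) (dim_col A)
     (\<lambda>(i,j). \<Sum>k. (A ^\<^sub>m k) $$ (i,j) / fact k)"

definition me_fun :: "real vec \<Rightarrow> real mat \<Rightarrow> real vec \<Rightarrow> real \<Rightarrow> real" where
  "me_fun a T t x = (if 0 \<le> x then scalar_prod a (mexp (x \<cdot>\<^sub>m T) *\<^sub>v t) else 0)"

definition me_density :: "(real \<Rightarrow> real) \<Rightarrow> bool" where
  "me_density g \<longleftrightarrow> (\<exists>n a T t. a \<in> carrier_vec n \<and> T \<in> carrier_mat n n \<and> t \<in> carrier_vec n
      \<and> g = me_fun a T t \<and> (\<forall>x. 0 \<le> g x) \<and> (g has_integral 1) {0..})"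

definition MEam :: "(real \<Rightarrow> real) \<Rightarrow> bool" where
  "MEam h \<longleftrightarrow> (\<forall>y. 0 \<le> h y) \<and>
     (\<exists>(K::nat) (c::nat \<Rightarrow> real) (g::nat \<Rightarrow> real \<Rightarrow> real).
        (\<forall>k<K. me_density (g k)) \<and> (\<Sum>k<K. c k) = 1 \<and> (\<forall>y. h y = (\<Sum>k<K. c k * g k y)))"

definition outer_vec :: "real vec \<Rightarrow> real vec \<Rightarrow> real mat" where
  "outer_vec t a = Matrix.mat (dim_vec t) (dim_vec a) (\<lambda>(i,j). t $ i * a $ j)"

definition blk_dim :: "(nat \<Rightarrow> real mat) \<Rightarrow> nat list \<Rightarrow> nat" where
  "blk_dim Tm is = sum_list (map (\<lambda>j. dim_row (Tm j)) is)"

fun big_alpha :: "(nat \<Rightarrow> real vec) \<Rightarrow> (nat \<Rightarrow> real mat) \<Rightarrow> nat list \<Rightarrow> real vec" where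
  "big_alpha al Tm [] = 0\<^sub>v 0"
| "big_alpha al Tm (j # rest) = al j @\<^sub>v 0\<^sub>v (blk_dim Tm rest)"

fun big_t :: "(nat \<Rightarrow> real vec) \<Rightarrow> (nat \<Rightarrow> real mat) \<Rightarrow> nat list \<Rightarrow> real vec" where
  "big_t tv Tm [] = 0\<^sub>v 0"
| "big_t tv Tm [j] = tv j"
| "big_t tv Tm (j # k # rest) = 0\<^sub>v (dim_row (Tm j)) @\<^sub>v big_t tv Tm (k # rest)"

text \<open>T_i: block upper bidiagonal, diagonal blocks T_{i_k}, superdiagonal blocks
  t_{i_k} alpha_{i_{k+1}}, zero elsewhere (built recursively: the upper right block of
  the first block row is t_{i_1} (alpha_{i_2},0,...,0)).\<close>
fun big_T :: "(nat \<Rightarrow> real vec) \<Rightarrow> (nat \<Rightarrow> real mat) \<Rightarrow> (nat \<Rightarrow> real vec) \<Rightarrow> nat list \<Rightarrow> real mat" where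
  "big_T al Tm tv [] = 0\<^sub>m 0 0"
| "big_T al Tm tv [j] = Tm j"
| "big_T al Tm tv (j # k # rest) =
     four_block_mat (Tm j) (outer_vec (tv j) (big_alpha al Tm (k # rest)))
       (0\<^sub>m (blk_dim Tm (k # rest)) (dim_row (Tm j))) (big_T al Tm tv (k # rest))"

end

theory Submission
  imports Defs
begin

(* Expanding alpha e^{Tx} t = sum_k (alpha T^k t) x^k / k!, the coefficients of the block
   bidiagonal matrix T_i are shifted Cauchy products of the coefficients of its diagonal blocks
   (a discrete variation-of-constants formula for powers of a block triangular matrix), and
   integrating term by term against the beta integrals int_0^y (y - s)^a s^b ds shows that
   alpha_i e^{T_i y} t_i is the convolution f_{i_1} * ... * f_{i_M}.  It is therefore the density
   of a sum of independent random variables with densities f_{i_1}, ..., f_{i_M}, i.e. of the image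
   of the product density under (x_1, ..., x_M) |-> x_1 + ... + x_M.  By linearity the image of the
   signed mixture f is the signed mixture f_S of these ME densities; f_S is nonnegative because it
   is continuous on [0, inf) and its integral over every interval is a probability. *)

no_notation vec_nth (infixl \<open>$\<close> 90)
no_notation inner (infix \<open>\<bullet>\<close> 70)

definition exp_series :: "(nat \<Rightarrow> real) \<Rightarrow> real \<Rightarrow> real" where
  "exp_series c y = (\<Sum>k. c k * y ^ k / fact k)"

definition geom_bounded :: "(nat \<Rightarrow> real) \<Rightarrow> bool" where
  "geom_bounded c \<longleftrightarrow> (\<exists>K C. 0 \<le> C \<and> (\<forall>k. \<bar>c k\<bar> \<le> K * C ^ k))"

lemma summable_exp_series_norm:
  assumes "geom_bounded c"
  shows "summable (\<lambda>k. norm (c k * y ^ k / fact k))"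
proof -
  obtain K C where "0 \<le> C" and bound: "\<And>k. \<bar>c k\<bar> \<le> K * C ^ k"
    using assms unfolding geom_bounded_def by blast
  have "summable (\<lambda>k. K * (inverse (fact k) * (C * \<bar>y\<bar>) ^ k))"
    by (intro summable_mult summable_exp)
  then show ?thesis
  proof (rule summable_comparison_test')
    fix k :: nat
    have "norm (c k * y ^ k / fact k) = \<bar>c k\<bar> * \<bar>y\<bar> ^ k / fact k"
      by (simp add: abs_mult power_abs)
    also have "\<dots> \<le> K * C ^ k * \<bar>y\<bar> ^ k / fact k"
      by (intro divide_right_mono mult_right_mono bound) auto
    also have "\<dots> = K * (inverse (fact k) * (C * \<bar>y\<bar>) ^ k)"
      by (simp add: power_mult_distrib divide_inverse mult_ac)
    finally show "norm (norm (c k * y ^ k / fact k)) \<le> K * (inverse (fact k) * (C * \<bar>y\<bar>) ^ k)"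
      by simp
  qed
qed

lemma summable_exp_series: "geom_bounded c \<Longrightarrow> summable (\<lambda>k. c k * y ^ k / fact k)"
  by (rule summable_norm_cancel[OF summable_exp_series_norm])

lemma isCont_exp_series:
  assumes "geom_bounded c"
  shows "isCont (exp_series c) x"
proof -
  have "summable (\<lambda>k. c k / fact k * (\<bar>x\<bar> + 1) ^ k)"
    using summable_exp_series[OF assms, of "\<bar>x\<bar> + 1"] by simp
  then have "isCont (\<lambda>y. \<Sum>k. c k / fact k * y ^ k) x"
    by (rule isCont_powser) simp
  then show ?thesis
    unfolding exp_series_def by simp
qed

lemma exp_series_lincomb:
  assumes "finite I" and "\<And>i. i \<in> I \<Longrightarrow> geom_bounded (c i)"
  shows "exp_series (\<lambda>k. \<Sum>i\<in>I. w i * c i k) y = (\<Sum>i\<in>I. w i * exp_series (c i) y)"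
proof -
  have "exp_series (\<lambda>k. \<Sum>i\<in>I. w i * c i k) y = (\<Sum>k. \<Sum>i\<in>I. w i * (c i k * y ^ k / fact k))"
    unfolding exp_series_def by (simp add: sum_distrib_right sum_divide_distrib mult.assoc)
  also have "\<dots> = (\<Sum>i\<in>I. \<Sum>k. w i * (c i k * y ^ k / fact k))"
    using assms by (intro suminf_sum summable_mult summable_exp_series) auto
  also have "\<dots> = (\<Sum>i\<in>I. w i * exp_series (c i) y)"
    unfolding exp_series_def using assms by (intro sum.cong suminf_mult summable_exp_series) auto
  finally show ?thesis .
qed

lemma has_real_derivative_power_over_fact:
  "((\<lambda>s. s ^ Suc n / fact (Suc n)) has_real_derivative (x::real) ^ n / fact n) (at x within S)"
proof -
  have "((\<lambda>s. s ^ Suc n / fact (Suc n)) has_real_derivative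
      real (Suc n) * x ^ (Suc n - Suc 0) / fact (Suc n)) (at x within S)"
    by (intro DERIV_cdivide DERIV_pow)
  then show ?thesis
    by (simp add: fact_Suc del: of_nat_Suc)
qed

lemma has_integral_beta_powers:
  fixes y :: real
  assumes "0 \<le> y"
  shows "((\<lambda>s. (y - s) ^ a / fact a * (s ^ b / fact b)) has_integral y ^ (a + b + 1) / fact (a + b + 1)) {0..y}"
proof (induction a arbitrary: b)
  case 0
  have "((\<lambda>s. s ^ b / fact b) has_integral y ^ Suc b / fact (Suc b) - 0 ^ Suc b / fact (Suc b)) {0..y}"
    using assms has_real_derivative_power_over_fact
    by (intro fundamental_theorem_of_calculus) (auto simp: has_real_derivative_iff_has_vector_derivative)
  then show ?case by simp
next
  case (Suc a)
  define F where "F s = (y - s) ^ Suc a / fact (Suc a) * (s ^ Suc b / fact (Suc b))" for s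
  have "((\<lambda>s. (y - s) ^ Suc a / fact (Suc a) * (s ^ b / fact b)
           - (y - s) ^ a / fact a * (s ^ Suc b / fact (Suc b))) has_integral F y - F 0) {0..y}"
  proof (rule fundamental_theorem_of_calculus[OF assms])
    fix x assume "x \<in> {0..y}"
    have "((\<lambda>s. (y - s) ^ Suc a / fact (Suc a)) has_real_derivative
        (y - x) ^ a / fact a * (0 - 1)) (at x within {0..y})"
      by (rule DERIV_chain2[OF has_real_derivative_power_over_fact]) (intro derivative_intros)
    from DERIV_mult[OF this has_real_derivative_power_over_fact]
    show "(F has_vector_derivative (y - x) ^ Suc a / fact (Suc a) * (x ^ b / fact b)
           - (y - x) ^ a / fact a * (x ^ Suc b / fact (Suc b))) (at x within {0..y})"
      unfolding F_def has_real_derivative_iff_has_vector_derivative[symmetric]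
      by (rule DERIV_cong) (simp add: algebra_simps)
  qed
  moreover have "F y - F 0 = 0"
    unfolding F_def by simp
  ultimately show ?case
    using has_integral_add[OF _ Suc.IH[of "Suc b"]] by fastforce
qed

lemma has_integral_suminf_bounded:
  fixes F :: "nat \<Rightarrow> real \<Rightarrow> real"
  assumes integrals: "\<And>k. (F k has_integral I k) {a..b}"
    and bound: "\<And>k s. s \<in> {a..b} \<Longrightarrow> \<bar>F k s\<bar> \<le> B k"
    and "summable B"
  shows "summable I" and "((\<lambda>s. \<Sum>k. F k s) has_integral (\<Sum>k. I k)) {a..b}"
proof -
  have conv: "(\<lambda>n. \<Sum>k<n. F k s) \<longlonglongrightarrow> (\<Sum>k. F k s)" if "s \<in> {a..b}" for s
  proof (rule summable_LIMSEQ, rule summable_comparison_test')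
    show "norm (F k s) \<le> B k" for k
      using bound[OF that] by simp
  qed fact
  have partial_bound: "norm (\<Sum>k<n. F k s) \<le> (\<Sum>k. B k)" if "s \<in> {a..b}" for n s
  proof -
    have "0 \<le> B k" for k
      using bound[OF that, of k] by linarith
    have "norm (\<Sum>k<n. F k s) \<le> (\<Sum>k<n. B k)"
      using bound[OF that] by (intro order.trans[OF norm_sum] sum_mono) simp
    also have "\<dots> \<le> (\<Sum>k. B k)"
      using \<open>\<And>k. 0 \<le> B k\<close> \<open>summable B\<close> by (intro sum_le_suminf) auto
    finally show ?thesis .
  qed
  have partial_integral: "integral {a..b} (\<lambda>s. \<Sum>k<n. F k s) = (\<Sum>k<n. I k)" for n
    using integrals by (intro integral_unique has_integral_sum) auto
  have "(\<lambda>s. \<Sum>k<n. F k s) integrable_on {a..b}" for n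
    using integrals by (intro integrable_sum) (auto intro: has_integral_integrable)
  from dominated_convergence[OF this integrable_const_ivl partial_bound conv]
  have "(\<lambda>s. \<Sum>k. F k s) integrable_on {a..b}"
    and "I sums integral {a..b} (\<lambda>s. \<Sum>k. F k s)"
    by (simp_all add: partial_integral sums_def)
  then show "summable I" and "((\<lambda>s. \<Sum>k. F k s) has_integral (\<Sum>k. I k)) {a..b}"
    by (auto simp: sums_iff has_integral_integral)
qed

definition conv_coeff :: "(nat \<Rightarrow> real) \<Rightarrow> (nat \<Rightarrow> real) \<Rightarrow> nat \<Rightarrow> real" where
  "conv_coeff u v k = (\<Sum>i<k. u i * v (k - 1 - i))"

lemma has_integral_Cauchy_product_term:
  assumes "0 \<le> y"
  shows "((\<lambda>s. \<Sum>i\<le>k. u i * (y - s) ^ i / fact i * (v (k - i) * s ^ (k - i) / fact (k - i)))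
    has_integral conv_coeff u v (Suc k) * y ^ Suc k / fact (Suc k)) {0..y}"
proof -
  have "((\<lambda>s. u i * v (k - i) * ((y - s) ^ i / fact i * (s ^ (k - i) / fact (k - i))))
      has_integral u i * v (k - i) * (y ^ Suc k / fact (Suc k))) {0..y}" if "i \<le> k" for i
    using has_integral_mult_right[OF has_integral_beta_powers[OF assms, of i "k - i"]] that by simp
  then have "((\<lambda>s. \<Sum>i\<le>k. u i * (y - s) ^ i / fact i * (v (k - i) * s ^ (k - i) / fact (k - i)))
      has_integral (\<Sum>i\<le>k. u i * v (k - i) * (y ^ Suc k / fact (Suc k)))) {0..y}"
    by (intro has_integral_sum) (auto simp: mult_ac)
  then show ?thesis
    by (simp add: conv_coeff_def lessThan_Suc_atMost sum_distrib_right sum_divide_distrib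
        del: fact_Suc power_Suc of_nat_Suc)
qed

lemma has_integral_exp_series_convolution:
  assumes u: "geom_bounded u" and v: "geom_bounded v" and "0 \<le> y"
  shows "((\<lambda>s. exp_series u (y - s) * exp_series v s) has_integral exp_series (conv_coeff u v) y) {0..y}"
proof -
  define G where "G k s = (\<Sum>i\<le>k. u i * (y - s) ^ i / fact i * (v (k - i) * s ^ (k - i) / fact (k - i)))" for k s
  define B where "B k = (\<Sum>i\<le>k. norm (u i * y ^ i / fact i) * norm (v (k - i) * y ^ (k - i) / fact (k - i)))" for k
  have product: "exp_series u (y - s) * exp_series v s = (\<Sum>k. G k s)" for s
    unfolding exp_series_def G_def by (intro Cauchy_product summable_exp_series_norm u v)
  have "summable B"
    using summable_exp_series_norm[OF u, of y] summable_exp_series_norm[OF v, of y]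
    unfolding B_def by (intro summable_Cauchy_product) simp_all
  have term_le: "\<bar>c * t ^ i / fact i\<bar> \<le> norm (c * y ^ i / fact i)" if "0 \<le> t" "t \<le> y" for c t i
  proof -
    have "\<bar>c\<bar> * t ^ i / fact i \<le> \<bar>c\<bar> * y ^ i / fact i"
      using that by (intro divide_right_mono mult_left_mono power_mono) auto
    moreover have "\<bar>c * t ^ i / fact i\<bar> = \<bar>c\<bar> * t ^ i / fact i" and "norm (c * y ^ i / fact i) = \<bar>c\<bar> * y ^ i / fact i"
      using that by (simp_all add: abs_mult)
    ultimately show ?thesis
      by simp
  qed
  have bound: "\<bar>G k s\<bar> \<le> B k" if "s \<in> {0..y}" for k s
  proof -
    have "\<bar>G k s\<bar> \<le> (\<Sum>i\<le>k. \<bar>u i * (y - s) ^ i / fact i\<bar> * \<bar>v (k - i) * s ^ (k - i) / fact (k - i)\<bar>)"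
      unfolding G_def abs_mult[symmetric] by (rule sum_abs)
    also have "\<dots> \<le> B k"
      unfolding B_def using that by (intro sum_mono mult_mono term_le) auto
    finally show ?thesis .
  qed
  have G_integrals: "(G k has_integral conv_coeff u v (Suc k) * y ^ Suc k / fact (Suc k)) {0..y}" for k
    unfolding G_def using \<open>0 \<le> y\<close> by (rule has_integral_Cauchy_product_term)
  have shifted: "summable (\<lambda>k. conv_coeff u v (Suc k) * y ^ Suc k / fact (Suc k))"
    and G_integral: "((\<lambda>s. \<Sum>k. G k s) has_integral (\<Sum>k. conv_coeff u v (Suc k) * y ^ Suc k / fact (Suc k))) {0..y}"
    using has_integral_suminf_bounded[OF G_integrals bound \<open>summable B\<close>] by auto
  moreover have "conv_coeff u v 0 = 0"
    by (simp add: conv_coeff_def)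
  moreover have "summable (\<lambda>k. conv_coeff u v k * y ^ k / fact k)"
    using shifted summable_Suc_iff by blast
  ultimately have "(\<Sum>k. conv_coeff u v (Suc k) * y ^ Suc k / fact (Suc k)) = exp_series (conv_coeff u v) y"
    unfolding exp_series_def by (subst suminf_split_head) simp_all
  with G_integral show ?thesis
    by (simp add: product)
qed

lemma pow_mat_Suc_left:
  fixes A :: "'a::semiring_1 mat"
  assumes "A \<in> carrier_mat n n"
  shows "A ^\<^sub>m Suc k = A * A ^\<^sub>m k"
proof (induction k)
  case 0
  then show ?case using assms by simp
next
  case (Suc k)
  have "A ^\<^sub>m Suc (Suc k) = (A * A ^\<^sub>m k) * A"
    using Suc by simp
  also have "\<dots> = A * (A ^\<^sub>m k * A)"
    using assms by (intro assoc_mult_mat) auto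
  finally show ?case by simp
qed

lemma pow_mat_mult_vec_carrier [simp]: "A \<in> carrier_mat n n \<Longrightarrow> A ^\<^sub>m k *\<^sub>v v \<in> carrier_vec n"
  unfolding carrier_vec_def by simp

lemma pow_mat_smult:
  fixes A :: "'a::comm_semiring_1 mat"
  assumes "A \<in> carrier_mat n n"
  shows "(c \<cdot>\<^sub>m A) ^\<^sub>m k = c ^ k \<cdot>\<^sub>m A ^\<^sub>m k"
proof (induction k)
  case 0
  then show ?case using assms by (intro eq_matI) auto
next
  case (Suc k)
  have "(c \<cdot>\<^sub>m A) ^\<^sub>m Suc k = c ^ k \<cdot>\<^sub>m (A ^\<^sub>m k * (c \<cdot>\<^sub>m A))"
    using Suc assms by (simp add: mult_smult_assoc_mat[of _ n n _ n])
  also have "\<dots> = c ^ k \<cdot>\<^sub>m (c \<cdot>\<^sub>m A ^\<^sub>m Suc k)"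
    using assms by (simp add: mult_smult_distrib[of _ n n _ n])
  finally show ?case
    using assms by (intro eq_matI) (auto simp: mult_ac)
qed

lemma scalar_prod_mult_mat_vec_eq_sum:
  fixes B :: "'a::comm_semiring_0 mat"
  assumes "a \<in> carrier_vec m" and "B \<in> carrier_mat m n" and "t \<in> carrier_vec n"
  shows "a \<bullet> (B *\<^sub>v t) = (\<Sum>(i, j)\<in>{..<m} \<times> {..<n}. a $ i * t $ j * B $$ (i, j))"
proof -
  have "a \<bullet> (B *\<^sub>v t) = (\<Sum>i<m. \<Sum>j<n. a $ i * t $ j * B $$ (i, j))"
    using assms
    by (auto simp: scalar_prod_def lessThan_atLeast0 sum_distrib_left mult_ac intro!: sum.cong)
  then show ?thesis
    by (simp add: sum.cartesian_product)
qed

lemma pow_mat_entry_bound: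
  fixes A :: "real mat"
  assumes A: "A \<in> carrier_mat n n"
  obtains C where "0 \<le> C" and "\<And>k i j. i < n \<Longrightarrow> j < n \<Longrightarrow> \<bar>(A ^\<^sub>m k) $$ (i, j)\<bar> \<le> C ^ k"
proof
  define B where "B = (\<Sum>(i, j)\<in>{..<n} \<times> {..<n}. \<bar>A $$ (i, j)\<bar>)"
  have "0 \<le> B"
    unfolding B_def by (intro sum_nonneg) auto
  have entry: "\<bar>A $$ (i, j)\<bar> \<le> B" if "i < n" "j < n" for i j
    using member_le_sum[of "(i, j)" "{..<n} \<times> {..<n}" "\<lambda>(i, j). \<bar>A $$ (i, j)\<bar>"] that
    unfolding B_def by auto
  show "0 \<le> real n * B + 1"
    using \<open>0 \<le> B\<close> by simp
  show "\<bar>(A ^\<^sub>m k) $$ (i, j)\<bar> \<le> (real n * B + 1) ^ k" if "i < n" "j < n" for k i j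
    using that
  proof (induction k arbitrary: i j)
    case 0
    then show ?case using A by simp
  next
    case (Suc k)
    have "\<bar>(A ^\<^sub>m Suc k) $$ (i, j)\<bar> = \<bar>\<Sum>l<n. (A ^\<^sub>m k) $$ (i, l) * A $$ (l, j)\<bar>"
      using Suc.prems A by (auto simp: scalar_prod_def lessThan_atLeast0 intro!: arg_cong[where f = abs] sum.cong)
    also have "\<dots> \<le> (\<Sum>l<n. (real n * B + 1) ^ k * B)"
      using Suc \<open>0 \<le> B\<close> entry
      by (intro order.trans[OF sum_abs] sum_mono) (auto simp: abs_mult intro!: mult_mono)
    also have "\<dots> \<le> (real n * B + 1) * (real n * B + 1) ^ k"
      using mult_right_mono[of "real n * B" "real n * B + 1" "(real n * B + 1) ^ k"] \<open>0 \<le> B\<close>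
      by (simp add: mult_ac)
    finally show ?case by simp
  qed
qed

definition me_coeff :: "real vec \<Rightarrow> real mat \<Rightarrow> real vec \<Rightarrow> nat \<Rightarrow> real" where
  "me_coeff a A t k = a \<bullet> ((A ^\<^sub>m k) *\<^sub>v t)"

lemma geom_bounded_me_coeff:
  assumes a: "a \<in> carrier_vec n" and A: "A \<in> carrier_mat n n" and t: "t \<in> carrier_vec n"
  shows "geom_bounded (me_coeff a A t)"
proof -
  obtain C where "0 \<le> C" and C: "\<And>k i j. i < n \<Longrightarrow> j < n \<Longrightarrow> \<bar>(A ^\<^sub>m k) $$ (i, j)\<bar> \<le> C ^ k"
    using pow_mat_entry_bound[OF A] by blast
  define K where "K = (\<Sum>(i, j)\<in>{..<n} \<times> {..<n}. \<bar>a $ i * t $ j\<bar>)"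
  have "\<bar>me_coeff a A t k\<bar> \<le> K * C ^ k" for k
  proof -
    have "\<bar>me_coeff a A t k\<bar> = \<bar>\<Sum>(i, j)\<in>{..<n} \<times> {..<n}. a $ i * t $ j * (A ^\<^sub>m k) $$ (i, j)\<bar>"
      unfolding me_coeff_def using a A t by (simp add: scalar_prod_mult_mat_vec_eq_sum[of _ n _ n])
    also have "\<dots> \<le> (\<Sum>(i, j)\<in>{..<n} \<times> {..<n}. \<bar>a $ i * t $ j\<bar> * C ^ k)"
      using C by (intro order.trans[OF sum_abs] sum_mono) (auto simp: abs_mult[of "a $ _ * t $ _"] intro!: mult_left_mono)
    also have "\<dots> = K * C ^ k"
      unfolding K_def by (simp add: sum_distrib_right case_prod_unfold)
    finally show ?thesis .
  qed
  with \<open>0 \<le> C\<close> show ?thesis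
    unfolding geom_bounded_def by blast
qed

lemma me_fun_eq_exp_series:
  assumes a: "a \<in> carrier_vec n" and A: "A \<in> carrier_mat n n" and t: "t \<in> carrier_vec n"
    and "0 \<le> y"
  shows "me_fun a A t y = exp_series (me_coeff a A t) y"
proof -
  let ?I = "{..<n} \<times> {..<n}"
  have mexp: "mexp (y \<cdot>\<^sub>m A) \<in> carrier_mat n n"
    unfolding mexp_def using A by auto
  have entry: "mexp (y \<cdot>\<^sub>m A) $$ x = exp_series (\<lambda>k. (A ^\<^sub>m k) $$ x) y" if "x \<in> ?I" for x
    using that A unfolding mexp_def exp_series_def by (cases x) (simp add: pow_mat_smult[OF A] mult_ac)
  have bounded: "geom_bounded (\<lambda>k. (A ^\<^sub>m k) $$ x)" if "x \<in> ?I" for x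
  proof -
    obtain C where "0 \<le> C" and "\<And>k i j. i < n \<Longrightarrow> j < n \<Longrightarrow> \<bar>(A ^\<^sub>m k) $$ (i, j)\<bar> \<le> C ^ k"
      using pow_mat_entry_bound[OF A] by blast
    with that show ?thesis
      unfolding geom_bounded_def by (intro exI[of _ 1] exI[of _ C]) auto
  qed
  have "me_fun a A t y = (\<Sum>(i, j)\<in>?I. a $ i * t $ j * mexp (y \<cdot>\<^sub>m A) $$ (i, j))"
    unfolding me_fun_def using \<open>0 \<le> y\<close> a t mexp by (simp add: scalar_prod_mult_mat_vec_eq_sum[of _ n _ n])
  also have "\<dots> = (\<Sum>(i, j)\<in>?I. a $ i * t $ j * exp_series (\<lambda>k. (A ^\<^sub>m k) $$ (i, j)) y)"
    by (intro sum.cong) (auto simp: entry)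
  also have "\<dots> = exp_series (\<lambda>k. \<Sum>(i, j)\<in>?I. a $ i * t $ j * (A ^\<^sub>m k) $$ (i, j)) y"
    using exp_series_lincomb[of ?I "\<lambda>x k. (A ^\<^sub>m k) $$ x" "\<lambda>x. a $ fst x * t $ snd x" y] bounded
    by (simp add: case_prod_unfold)
  also have "\<dots> = exp_series (me_coeff a A t) y"
    unfolding me_coeff_def using a A t by (simp add: scalar_prod_mult_mat_vec_eq_sum[of _ n _ n])
  finally show ?thesis .
qed

lemma me_fun_neg: "y < 0 \<Longrightarrow> me_fun a A t y = 0"
  unfolding me_fun_def by simp

lemma continuous_on_me_fun:
  assumes "a \<in> carrier_vec n" and "A \<in> carrier_mat n n" and "t \<in> carrier_vec n"
  shows "continuous_on {0..} (me_fun a A t)"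
proof -
  have "continuous_on {0..} (exp_series (me_coeff a A t))"
    using isCont_exp_series[OF geom_bounded_me_coeff[OF assms]] by (simp add: continuous_at_imp_continuous_on)
  moreover have "continuous_on {0..} (me_fun a A t) = continuous_on {0..} (exp_series (me_coeff a A t))"
    using me_fun_eq_exp_series[OF assms] by (intro continuous_on_cong) auto
  ultimately show ?thesis
    by simp
qed

lemma borel_measurable_me_fun:
  assumes "a \<in> carrier_vec n" and "A \<in> carrier_mat n n" and "t \<in> carrier_vec n"
  shows "me_fun a A t \<in> borel_measurable borel"
proof -
  have "me_fun a A t = (\<lambda>y. if 0 \<le> y then exp_series (me_coeff a A t) y else 0)"
    using me_fun_eq_exp_series[OF assms] me_fun_neg by fastforce
  moreover have "exp_series (me_coeff a A t) \<in> borel_measurable borel"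
    using isCont_exp_series[OF geom_bounded_me_coeff[OF assms]]
    by (intro borel_measurable_continuous_onI) (simp add: continuous_at_imp_continuous_on)
  ultimately show ?thesis
    by simp
qed

lemma outer_vec_carrier: "t \<in> carrier_vec n1 \<Longrightarrow> a \<in> carrier_vec n2 \<Longrightarrow> outer_vec t a \<in> carrier_mat n1 n2"
  unfolding outer_vec_def by auto

lemma outer_vec_mult_vec:
  assumes t: "t \<in> carrier_vec n1" and a: "a \<in> carrier_vec n2" and z: "z \<in> carrier_vec n2"
  shows "outer_vec t a *\<^sub>v z = (a \<bullet> z) \<cdot>\<^sub>v t"
proof (rule eq_vecI)
  fix i assume "i < dim_vec ((a \<bullet> z) \<cdot>\<^sub>v t)"
  with t a z show "(outer_vec t a *\<^sub>v z) $ i = ((a \<bullet> z) \<cdot>\<^sub>v t) $ i"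
    unfolding outer_vec_def by (auto simp: scalar_prod_def sum_distrib_left mult_ac intro!: sum.cong)
qed (use t a in \<open>simp add: outer_vec_def\<close>)

lemma me_coeff_0:
  assumes "A \<in> carrier_mat n n" and "t \<in> carrier_vec n"
  shows "me_coeff b A t 0 = b \<bullet> t"
  using assms unfolding me_coeff_def by simp

lemma me_coeff_Suc:
  assumes A: "A \<in> carrier_mat n n" and b: "b \<in> carrier_vec n" and t: "t \<in> carrier_vec n"
  shows "me_coeff b A t (Suc k) = me_coeff (transpose_mat A *\<^sub>v b) A t k"
proof -
  have "me_coeff b A t (Suc k) = b \<bullet> (A *\<^sub>v ((A ^\<^sub>m k) *\<^sub>v t))"
    unfolding me_coeff_def pow_mat_Suc_left[OF A] using A t by (simp add: assoc_mult_mat_vec[of _ n n _ n])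
  also have "\<dots> = me_coeff (transpose_mat A *\<^sub>v b) A t k"
    unfolding me_coeff_def using A t by (intro transpose_vec_mult_scalar[OF A _ b, symmetric]) simp
  finally show ?thesis .
qed

lemma scalar_prod_linear_recurrence:
  assumes A: "A \<in> carrier_mat n n" and t: "t \<in> carrier_vec n"
    and x0: "x 0 = 0\<^sub>v n" and xSuc: "\<And>k. x (Suc k) = A *\<^sub>v x k + c k \<cdot>\<^sub>v t"
    and b: "b \<in> carrier_vec n"
  shows "b \<bullet> x k = conv_coeff (me_coeff b A t) c k"
proof -
  have x: "x k \<in> carrier_vec n" for k
    by (induction k) (use A t in \<open>simp_all add: x0 xSuc\<close>)
  from b show ?thesis
  proof (induction k arbitrary: b)
    case 0
    then show ?case by (simp add: x0 conv_coeff_def)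
  next
    case (Suc k)
    have "b \<bullet> x (Suc k) = (transpose_mat A *\<^sub>v b) \<bullet> x k + c k * (b \<bullet> t)"
      using Suc.prems A t x
      by (simp add: xSuc scalar_prod_add_distrib[of _ n] transpose_vec_mult_scalar[of _ n n])
    also have "\<dots> = (\<Sum>i<k. me_coeff b A t (Suc i) * c (k - 1 - i)) + me_coeff b A t 0 * c k"
      using Suc A t by (simp add: conv_coeff_def me_coeff_Suc me_coeff_0)
    also have "\<dots> = conv_coeff (me_coeff b A t) c (Suc k)"
      unfolding conv_coeff_def sum.lessThan_Suc_shift by simp
    finally show ?case .
  qed
qed

lemma four_block_pow_mult_vec:
  assumes A: "A \<in> carrier_mat n1 n1" and D: "D \<in> carrier_mat n2 n2"
    and t1: "t1 \<in> carrier_vec n1" and a2: "a2 \<in> carrier_vec n2" and t2: "t2 \<in> carrier_vec n2"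
    and x0: "x 0 = 0\<^sub>v n1" and xSuc: "\<And>k. x (Suc k) = A *\<^sub>v x k + me_coeff a2 D t2 k \<cdot>\<^sub>v t1"
  shows "four_block_mat A (outer_vec t1 a2) (0\<^sub>m n2 n1) D ^\<^sub>m k *\<^sub>v (0\<^sub>v n1 @\<^sub>v t2) = x k @\<^sub>v (D ^\<^sub>m k *\<^sub>v t2)"
proof (induction k)
  case 0
  then show ?case using A D t2 by (simp add: x0)
next
  case (Suc k)
  let ?T = "four_block_mat A (outer_vec t1 a2) (0\<^sub>m n2 n1) D"
  have T: "?T \<in> carrier_mat (n1 + n2) (n1 + n2)"
    using A D by (intro four_block_carrier_mat)
  have x: "x k \<in> carrier_vec n1" for k
    by (induction k) (use A t1 in \<open>simp_all add: x0 xSuc\<close>)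
  have "?T ^\<^sub>m Suc k *\<^sub>v (0\<^sub>v n1 @\<^sub>v t2) = ?T *\<^sub>v (x k @\<^sub>v (D ^\<^sub>m k *\<^sub>v t2))"
    unfolding pow_mat_Suc_left[OF T] Suc.IH[symmetric] using T t2
    by (intro assoc_mult_mat_vec[of _ "n1 + n2" "n1 + n2" _ "n1 + n2"]) auto
  also have "\<dots> = (A *\<^sub>v x k + outer_vec t1 a2 *\<^sub>v (D ^\<^sub>m k *\<^sub>v t2)) @\<^sub>v
                    (0\<^sub>m n2 n1 *\<^sub>v x k + D *\<^sub>v (D ^\<^sub>m k *\<^sub>v t2))"
    using A D t2 x outer_vec_carrier[OF t1 a2] by (intro four_block_mat_mult_vec) auto
  also have "0\<^sub>m n2 n1 *\<^sub>v x k = 0\<^sub>v n2"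
    using x[of k] by (intro eq_vecI) auto
  also have "(A *\<^sub>v x k + outer_vec t1 a2 *\<^sub>v (D ^\<^sub>m k *\<^sub>v t2)) @\<^sub>v (0\<^sub>v n2 + D *\<^sub>v (D ^\<^sub>m k *\<^sub>v t2))
      = x (Suc k) @\<^sub>v (D ^\<^sub>m Suc k *\<^sub>v t2)"
    unfolding pow_mat_Suc_left[OF D] using A D t1 a2 t2 x
    by (simp add: xSuc me_coeff_def outer_vec_mult_vec[of _ n1 _ n2] assoc_mult_mat_vec[of _ n2 n2 _ n2])
  finally show ?case .
qed

lemma me_coeff_four_block:
  assumes a: "a \<in> carrier_vec n1" and A: "A \<in> carrier_mat n1 n1" and t1: "t1 \<in> carrier_vec n1"
    and a2: "a2 \<in> carrier_vec n2" and D: "D \<in> carrier_mat n2 n2" and t2: "t2 \<in> carrier_vec n2"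
  shows "me_coeff (a @\<^sub>v 0\<^sub>v n2) (four_block_mat A (outer_vec t1 a2) (0\<^sub>m n2 n1) D) (0\<^sub>v n1 @\<^sub>v t2)
    = conv_coeff (me_coeff a A t1) (me_coeff a2 D t2)"
proof
  fix k
  define x where "x = rec_nat (0\<^sub>v n1) (\<lambda>k xk. A *\<^sub>v xk + me_coeff a2 D t2 k \<cdot>\<^sub>v t1)"
  have x0: "x 0 = 0\<^sub>v n1" and xSuc: "\<And>k. x (Suc k) = A *\<^sub>v x k + me_coeff a2 D t2 k \<cdot>\<^sub>v t1"
    by (simp_all add: x_def)
  have "x k \<in> carrier_vec n1"
    by (induction k) (use A t1 in \<open>simp_all add: x0 xSuc\<close>)
  then have "me_coeff (a @\<^sub>v 0\<^sub>v n2) (four_block_mat A (outer_vec t1 a2) (0\<^sub>m n2 n1) D) (0\<^sub>v n1 @\<^sub>v t2) k = a \<bullet> x k"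
    unfolding me_coeff_def four_block_pow_mult_vec[OF A D t1 a2 t2 x0 xSuc]
    using a D t2 by (simp add: scalar_prod_append[of _ n1 _ n2])
  also have "\<dots> = conv_coeff (me_coeff a A t1) (me_coeff a2 D t2) k"
    by (rule scalar_prod_linear_recurrence[OF A t1 x0 xSuc a])
  finally show "me_coeff (a @\<^sub>v 0\<^sub>v n2) (four_block_mat A (outer_vec t1 a2) (0\<^sub>m n2 n1) D) (0\<^sub>v n1 @\<^sub>v t2) k
      = conv_coeff (me_coeff a A t1) (me_coeff a2 D t2) k" .
qed

lemma has_integral_me_fun_four_block:
  assumes a: "a \<in> carrier_vec n1" and A: "A \<in> carrier_mat n1 n1" and t1: "t1 \<in> carrier_vec n1"
    and a2: "a2 \<in> carrier_vec n2" and D: "D \<in> carrier_mat n2 n2" and t2: "t2 \<in> carrier_vec n2"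
    and "0 \<le> y"
  shows "((\<lambda>s. me_fun a A t1 (y - s) * me_fun a2 D t2 s) has_integral
      me_fun (a @\<^sub>v 0\<^sub>v n2) (four_block_mat A (outer_vec t1 a2) (0\<^sub>m n2 n1) D) (0\<^sub>v n1 @\<^sub>v t2) y) {0..y}"
proof -
  let ?u = "me_coeff a A t1" and ?v = "me_coeff a2 D t2"
  have block: "me_fun (a @\<^sub>v 0\<^sub>v n2) (four_block_mat A (outer_vec t1 a2) (0\<^sub>m n2 n1) D) (0\<^sub>v n1 @\<^sub>v t2) y
      = exp_series (conv_coeff ?u ?v) y"
    using assms by (subst me_fun_eq_exp_series[where n = "n1 + n2"])
      (auto simp: me_coeff_four_block intro!: four_block_carrier_mat outer_vec_carrier)
  have factors: "exp_series ?u (y - s) * exp_series ?v s = me_fun a A t1 (y - s) * me_fun a2 D t2 s"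
    if "s \<in> {0..y}" for s
    using that assms by (simp add: me_fun_eq_exp_series)
  have "((\<lambda>s. exp_series ?u (y - s) * exp_series ?v s) has_integral exp_series (conv_coeff ?u ?v) y) {0..y}"
    using assms by (intro has_integral_exp_series_convolution geom_bounded_me_coeff)
  from has_integral_eq[OF factors this] show ?thesis
    unfolding block .
qed

lemma PiM_density_lborel:
  fixes f :: "'i \<Rightarrow> real \<Rightarrow> real"
  assumes "finite I" and f: "\<And>i. i \<in> I \<Longrightarrow> f i \<in> borel_measurable borel"
  shows "PiM I (\<lambda>i. density lborel (\<lambda>x. ennreal (f i x)))
    = density (PiM I (\<lambda>_. lborel)) (\<lambda>x. \<Prod>i\<in>I. ennreal (f i (x i)))"
proof -
  \<comment> \<open>\<open>product_sigma_finite\<close> asks every factor to be sigma-finite, also those outside \<open>I\<close>\<close>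
  define f' where "f' i = (if i \<in> I then f i else (\<lambda>_. 0))" for i
  have f': "f' i \<in> borel_measurable borel" for i
    using f by (simp add: f'_def)
  interpret lborel_family: product_sigma_finite "\<lambda>_. lborel :: real measure"
    by (simp add: product_sigma_finite_def lborel.sigma_finite_measure_axioms)
  interpret product_sigma_finite "\<lambda>i. density lborel (\<lambda>x. ennreal (f' i x))"
    unfolding product_sigma_finite_def using f'
    by (subst sigma_finite_measure.sigma_finite_iff_density_finite[OF sigma_finite_lborel]) auto
  have "PiM I (\<lambda>i. density lborel (\<lambda>x. ennreal (f i x))) = PiM I (\<lambda>i. density lborel (\<lambda>x. ennreal (f' i x)))"
    by (rule PiM_cong) (simp_all add: f'_def)
  also have "\<dots> = density (PiM I (\<lambda>_. lborel)) (\<lambda>x. \<Prod>i\<in>I. ennreal (f i (x i)))"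
  proof (rule PiM_eqI[symmetric, OF \<open>finite I\<close>])
    show "sets (density (PiM I (\<lambda>_. lborel)) (\<lambda>x. \<Prod>i\<in>I. ennreal (f i (x i))))
        = sets (PiM I (\<lambda>i. density lborel (\<lambda>x. ennreal (f' i x))))"
      by (simp cong: sets_PiM_cong)
    fix A assume A: "\<And>i. i \<in> I \<Longrightarrow> A i \<in> sets (density lborel (\<lambda>x. ennreal (f' i x)))"
    have "emeasure (density (PiM I (\<lambda>_. lborel)) (\<lambda>x. \<Prod>i\<in>I. ennreal (f i (x i)))) (Pi\<^sub>E I A)
        = (\<integral>\<^sup>+x. (\<Prod>i\<in>I. ennreal (f' i (x i)) * indicator (A i) (x i)) \<partial>PiM I (\<lambda>_. lborel))"
      using A f \<open>finite I\<close>
      by (subst emeasure_density)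
         (auto intro!: nn_integral_cong simp: f'_def space_PiM PiE_iff prod.distrib[symmetric]
           split: split_indicator intro: prod_zero)
    also have "\<dots> = (\<Prod>i\<in>I. emeasure (density lborel (\<lambda>x. ennreal (f' i x))) (A i))"
      using A f' \<open>finite I\<close>
      by (subst lborel_family.product_nn_integral_prod) (auto simp: emeasure_density)
    finally show "emeasure (density (PiM I (\<lambda>_. lborel)) (\<lambda>x. \<Prod>i\<in>I. ennreal (f i (x i)))) (Pi\<^sub>E I A)
        = (\<Prod>i\<in>I. emeasure (density lborel (\<lambda>x. ennreal (f' i x))) (A i))" .
  qed
  finally show ?thesis .
qed

lemma indep_vars_PiM_components:
  assumes "I \<noteq> {}" and M: "\<And>i. i \<in> I \<Longrightarrow> prob_space (M i)"
  shows "prob_space.indep_vars (PiM I M) M (\<lambda>i x. x i) I"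
proof -
  interpret prob_space "PiM I M"
    using M by (rule prob_space_PiM)
  have "distr (PiM I M) (PiM I M) (\<lambda>x. \<lambda>i\<in>I. x i) = distr (PiM I M) (PiM I M) (\<lambda>x. x)"
    by (intro distr_cong) (auto simp: space_PiM PiE_def extensional_def fun_eq_iff)
  also have "\<dots> = PiM I M"
    by (simp add: distr_id2)
  also have "\<dots> = PiM I (\<lambda>i. distr (PiM I M) (M i) (\<lambda>x. x i))"
    using M by (intro PiM_cong) (simp_all add: distr_PiM_component)
  finally show ?thesis
    using \<open>I \<noteq> {}\<close> by (subst indep_vars_iff_distr_eq_PiM') auto
qed

lemma distributed_if_integral_indicator_eq:
  fixes f :: "'b \<Rightarrow> real" and T :: "'b \<Rightarrow> real" and h :: "real \<Rightarrow> real"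
  assumes "prob_space P"
    and X: "distributed P N X (\<lambda>x. ennreal (f x))" and f_nonneg: "\<And>x. 0 \<le> f x"
    and T: "T \<in> borel_measurable N"
    and h_measurable: "h \<in> borel_measurable borel" and h_nonneg: "\<And>y. 0 \<le> h y" and "integrable lborel h"
    and eq: "\<And>A. A \<in> sets borel \<Longrightarrow> (\<integral>x. f x * indicator A (T x) \<partial>N) = (\<integral>y. h y * indicator A y \<partial>lborel)"
  shows "distributed P lborel (\<lambda>\<omega>. T (X \<omega>)) (\<lambda>y. ennreal (h y))"
proof -
  interpret prob_space P by fact
  have TX: "(\<lambda>\<omega>. T (X \<omega>)) \<in> borel_measurable P"
    using T distributed_measurable[OF X] by measurable
  have "emeasure (distr P lborel (\<lambda>\<omega>. T (X \<omega>))) A = emeasure (density lborel (\<lambda>y. ennreal (h y))) A"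
    if A: "A \<in> sets borel" for A
  proof -
    have "emeasure (distr P lborel (\<lambda>\<omega>. T (X \<omega>))) A = ennreal (measure P ((\<lambda>\<omega>. T (X \<omega>)) -` A \<inter> space P))"
      using TX A by (simp add: emeasure_distr emeasure_eq_measure)
    also have "\<dots> = ennreal (\<integral>\<omega>. indicator A (T (X \<omega>)) \<partial>P)"
      by (simp add: indicator_vimage[symmetric] vimage_def)
    also have "\<dots> = ennreal (\<integral>x. f x * indicator A (T x) \<partial>N)"
      using X T A f_nonneg by (subst distributed_integral[OF X]) auto
    also have "\<dots> = ennreal (\<integral>y. h y * indicator A y \<partial>lborel)"
      using A by (simp add: eq)
    also have "\<dots> = emeasure (density lborel (\<lambda>y. ennreal (h y))) A"
      using A h_measurable h_nonneg \<open>integrable lborel h\<close>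
      by (subst nn_integral_eq_integral[symmetric])
         (auto simp: emeasure_density integrable_real_mult_indicator intro!: nn_integral_cong split: split_indicator)
    finally show ?thesis .
  qed
  then show ?thesis
    unfolding distributed_def using TX h_measurable by (auto intro: measure_eqI)
qed

lemma nonneg_if_interval_integrals_nonneg:
  fixes \<phi> :: "real \<Rightarrow> real"
  assumes cont: "continuous_on {y..} \<phi>"
    and nonneg: "\<And>d. 0 < d \<Longrightarrow> 0 \<le> (\<integral>x. \<phi> x * indicator {y..y + d} x \<partial>lborel)"
  shows "0 \<le> \<phi> y"
proof (rule ccontr)
  assume "\<not> 0 \<le> \<phi> y"
  then have "0 < - \<phi> y / 2"
    by simp
  with cont obtain d where "0 < d" and d: "\<And>x. x \<in> {y..} \<Longrightarrow> dist x y < d \<Longrightarrow> dist (\<phi> x) (\<phi> y) < - \<phi> y / 2"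
    unfolding continuous_on_iff by (metis atLeast_iff order_refl)
  have below: "\<phi> x * indicator {y..y + d / 2} x \<le> \<phi> y / 2 * indicator {y..y + d / 2} x" for x
    using d[of x] \<open>0 < d\<close> by (auto simp: dist_real_def split: split_indicator)
  have "integrable lborel (\<lambda>x. \<phi> x * indicator {y..y + d / 2} x)"
    using borel_integrable_atLeastAtMost'[OF continuous_on_subset[OF cont]]
    by (auto simp: set_integrable_def mult.commute)
  then have "(\<integral>x. \<phi> x * indicator {y..y + d / 2} x \<partial>lborel) \<le> (\<integral>x. \<phi> y / 2 * indicator {y..y + d / 2} x \<partial>lborel)"
    using borel_integrable_atLeastAtMost[of y "y + d / 2" "\<lambda>_. \<phi> y / 2"]
    by (intro integral_mono[OF _ _ below]) simp_all
  also have "\<dots> = \<phi> y / 2 * (d / 2)"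
    using \<open>0 < d\<close> by simp
  also have "\<dots> < 0"
    using \<open>0 < d\<close> \<open>0 < - \<phi> y / 2\<close> by (simp add: mult_neg_pos)
  finally show False
    using nonneg[of "d / 2"] \<open>0 < d\<close> by simp
qed

lemma MEam_finite_mixture:
  assumes "finite S" and dens: "\<And>s. s \<in> S \<Longrightarrow> me_density (g s)" and "(\<Sum>s\<in>S. p s) = 1"
    and nonneg: "\<And>y. 0 \<le> (\<Sum>s\<in>S. p s * g s y)"
  shows "MEam (\<lambda>y. \<Sum>s\<in>S. p s * g s y)"
proof -
  obtain e where e: "bij_betw e {..<card S} S"
    using ex_bij_betw_nat_finite[OF \<open>finite S\<close>] by (auto simp: atLeast0LessThan)
  have "(\<Sum>s\<in>S. F s) = (\<Sum>k<card S. F (e k))" for F :: "_ \<Rightarrow> real"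
    using sum.reindex_bij_betw[OF e, of F] by simp
  moreover have "me_density (g (e k))" if "k < card S" for k
    using dens bij_betwE[OF e] that by blast
  ultimately show ?thesis
    unfolding MEam_def using nonneg \<open>(\<Sum>s\<in>S. p s) = 1\<close>
    by (intro conjI exI[of _ "card S"] exI[of _ "\<lambda>k. p (e k)"] exI[of _ "\<lambda>k. g (e k)"]) auto
qed

lemma append_vec_vNil_right [simp]: "v @\<^sub>v vNil = v"
  by (rule eq_vecI) auto

locale me_family =
  fixes al :: "nat \<Rightarrow> real vec" and Tm :: "nat \<Rightarrow> real mat" and tv :: "nat \<Rightarrow> real vec"
    and n :: "nat \<Rightarrow> nat" and V :: "nat set"
  assumes carriers: "\<And>j. j \<in> V \<Longrightarrow>
      al j \<in> carrier_vec (n j) \<and> Tm j \<in> carrier_mat (n j) (n j) \<and> tv j \<in> carrier_vec (n j)"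
    and me_density: "\<And>j. j \<in> V \<Longrightarrow> me_density (me_fun (al j) (Tm j) (tv j))"
begin

abbreviation me :: "nat \<Rightarrow> real \<Rightarrow> real" where
  "me j \<equiv> me_fun (al j) (Tm j) (tv j)"

abbreviation block_me :: "nat list \<Rightarrow> real \<Rightarrow> real" where
  "block_me js \<equiv> me_fun (big_alpha al Tm js) (big_T al Tm tv js) (big_t tv Tm js)"

abbreviation me_product :: "nat list \<Rightarrow> (nat \<Rightarrow> real) measure" where
  "me_product js \<equiv> PiM {..<length js} (\<lambda>k. density lborel (\<lambda>x. ennreal (me (js ! k) x)))"

lemma me_nonneg: "j \<in> V \<Longrightarrow> 0 \<le> me j y"
  using me_density unfolding me_density_def by blast

lemma borel_measurable_me: "j \<in> V \<Longrightarrow> me j \<in> borel_measurable borel"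
  using carriers by (blast intro: borel_measurable_me_fun)

lemma prob_space_density_me: "j \<in> V \<Longrightarrow> prob_space (density lborel (\<lambda>x. ennreal (me j x)))"
proof (rule prob_spaceI)
  assume j: "j \<in> V"
  then have "(me j has_integral 1) {0..}"
    using me_density unfolding me_density_def by blast
  then have "(\<integral>\<^sup>+x. ennreal (me j x) * indicator {0..} x \<partial>lborel) = 1"
    using me_nonneg[OF j] by (simp add: nn_integral_has_integral_lebesgue')
  moreover have "ennreal (me j x) * indicator {0..} x = ennreal (me j x)" for x
    by (simp add: me_fun_neg split: split_indicator)
  ultimately show "emeasure (density lborel (\<lambda>x. ennreal (me j x))) (space (density lborel (\<lambda>x. ennreal (me j x)))) = 1"
    using borel_measurable_me[OF j] by (simp add: emeasure_density)
qed

lemma prob_space_me_product: "set js \<subseteq> V \<Longrightarrow> prob_space (me_product js)"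
  by (intro prob_space_PiM prob_space_density_me) auto

lemma block_carriers:
  "js \<noteq> [] \<Longrightarrow> set js \<subseteq> V \<Longrightarrow>
    big_alpha al Tm js \<in> carrier_vec (blk_dim Tm js) \<and>
    big_T al Tm tv js \<in> carrier_mat (blk_dim Tm js) (blk_dim Tm js) \<and>
    big_t tv Tm js \<in> carrier_vec (blk_dim Tm js)"
proof (induction js rule: induct_list012)
  case (2 j)
  then show ?case
    using carriers[of j] by (auto simp: blk_dim_def)
next
  case (3 j k js)
  then have "dim_row (Tm j) = n j" and "blk_dim Tm (j # k # js) = n j + blk_dim Tm (k # js)"
    using carriers[of j] by (auto simp: blk_dim_def)
  with 3 carriers[of j] show ?case
    by (auto intro!: four_block_carrier_mat outer_vec_carrier)
qed simp

lemma borel_measurable_block_me: "js \<noteq> [] \<Longrightarrow> set js \<subseteq> V \<Longrightarrow> block_me js \<in> borel_measurable borel"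
  using block_carriers by (blast intro: borel_measurable_me_fun)

lemma continuous_on_block_me: "js \<noteq> [] \<Longrightarrow> set js \<subseteq> V \<Longrightarrow> continuous_on {0..} (block_me js)"
  using block_carriers by (blast intro: continuous_on_me_fun)

lemma has_integral_block_me_Cons:
  assumes "j \<in> V" and "js \<noteq> []" and "set js \<subseteq> V" and "0 \<le> y"
  shows "((\<lambda>s. me j (y - s) * block_me js s) has_integral block_me (j # js) y) {0..y}"
proof -
  obtain k ks where js: "js = k # ks"
    using \<open>js \<noteq> []\<close> by (cases js) auto
  have "dim_row (Tm j) = n j"
    using carriers[OF \<open>j \<in> V\<close>] by auto
  then have "block_me (j # js) = me_fun (al j @\<^sub>v 0\<^sub>v (blk_dim Tm js))
      (four_block_mat (Tm j) (outer_vec (tv j) (big_alpha al Tm js)) (0\<^sub>m (blk_dim Tm js) (n j)) (big_T al Tm tv js))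
      (0\<^sub>v (n j) @\<^sub>v big_t tv Tm js)"
    by (simp add: js)
  then show ?thesis
    using carriers[OF \<open>j \<in> V\<close>] block_carriers[OF \<open>js \<noteq> []\<close> \<open>set js \<subseteq> V\<close>] \<open>0 \<le> y\<close>
    by (simp only:) (intro has_integral_me_fun_four_block; blast)
qed

lemma block_me_nonneg: "js \<noteq> [] \<Longrightarrow> set js \<subseteq> V \<Longrightarrow> 0 \<le> block_me js y"
proof (induction js arbitrary: y rule: induct_list012)
  case (2 j)
  then show ?case by (simp add: blk_dim_def me_nonneg)
next
  case (3 j k js)
  show ?case
  proof (cases "0 \<le> y")
    case True
    with 3 show ?thesis
      by (intro has_integral_nonneg[OF has_integral_block_me_Cons]) (auto intro!: mult_nonneg_nonneg me_nonneg)
  qed (simp add: me_fun_neg)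
qed simp

lemma block_me_Cons_eq_nn_convolution:
  assumes "j \<in> V" and "js \<noteq> []" and "set js \<subseteq> V"
  shows "ennreal (block_me (j # js) y) = (\<integral>\<^sup>+s. ennreal (me j (y - s)) * ennreal (block_me js s) \<partial>lborel)"
proof (cases "0 \<le> y")
  case True
  have "(\<integral>\<^sup>+s. ennreal (me j (y - s)) * ennreal (block_me js s) \<partial>lborel)
      = (\<integral>\<^sup>+s. ennreal (me j (y - s) * block_me js s) * indicator {0..y} s \<partial>lborel)"
    using assms by (intro nn_integral_cong) (auto simp: me_fun_neg ennreal_mult' me_nonneg split: split_indicator)
  also have "\<dots> = ennreal (block_me (j # js) y)"
    using assms True me_nonneg block_me_nonneg
    by (intro nn_integral_has_integral_lebesgue' has_integral_block_me_Cons) auto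
  finally show ?thesis ..
next
  case False
  have "ennreal (me j (y - s)) * ennreal (block_me js s) = 0" for s
    using False by (cases "s < 0") (simp_all add: me_fun_neg)
  then have "(\<lambda>s. ennreal (me j (y - s)) * ennreal (block_me js s)) = (\<lambda>_. 0)"
    by (rule ext)
  with False show ?thesis
    by (simp add: me_fun_neg)
qed

lemma distributed_sum_block_me:
  assumes "prob_space P" and indep: "prob_space.indep_vars P (\<lambda>_. borel) X I"
    and "js \<noteq> []" and "set js \<subseteq> V" and "{m..<m + length js} \<subseteq> I"
    and "\<And>k. k < length js \<Longrightarrow> distributed P lborel (X (m + k)) (\<lambda>x. ennreal (me (js ! k) x))"
  shows "distributed P lborel (\<lambda>\<omega>. \<Sum>i\<in>{m..<m + length js}. X i \<omega>) (\<lambda>y. ennreal (block_me js y))"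
  using assms(3-)
proof (induction js arbitrary: m rule: induct_list012)
  case (2 j)
  then show ?case
    using "2.prems"(4)[of 0] by (simp add: blk_dim_def)
next
  case (3 j k js)
  interpret prob_space P by fact
  let ?rest = "{Suc m..<Suc m + length (k # js)}"
  have "distributed P lborel (X (Suc m + i)) (\<lambda>x. ennreal (me ((k # js) ! i) x))" if "i < length (k # js)" for i
    using "3.prems"(4)[of "Suc i"] that by simp
  with "3.prems" have "distributed P lborel (\<lambda>\<omega>. \<Sum>i\<in>?rest. X i \<omega>) (\<lambda>y. ennreal (block_me (k # js) y))"
    by (intro "3.IH"(2)) auto
  moreover have "distributed P lborel (X m) (\<lambda>x. ennreal (me j x))"
    using "3.prems"(4)[of 0] by simp
  moreover have "indep_var borel (X m) borel (\<lambda>\<omega>. \<Sum>i\<in>?rest. X i \<omega>)"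
    using "3.prems"(3) by (intro indep_vars_sum indep_vars_subset[OF indep]) auto
  ultimately have "distributed P lborel (\<lambda>\<omega>. X m \<omega> + (\<Sum>i\<in>?rest. X i \<omega>))
      (\<lambda>y. \<integral>\<^sup>+s. ennreal (me j (y - s)) * ennreal (block_me (k # js) s) \<partial>lborel)"
    by (intro distributed_convolution)
  moreover have "{m..<m + length (j # k # js)} = insert m ?rest"
    by auto
  ultimately show ?case
    using "3.prems" by (simp add: block_me_Cons_eq_nn_convolution[symmetric] del: big_alpha.simps big_T.simps big_t.simps)
qed simp

lemma distributed_sum_me_product:
  assumes "js \<noteq> []" and "set js \<subseteq> V"
  shows "distributed (me_product js) lborel (\<lambda>x. \<Sum>k<length js. x k) (\<lambda>y. ennreal (block_me js y))"
proof -
  let ?M = "\<lambda>k. density lborel (\<lambda>x. ennreal (me (js ! k) x))"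
  have M: "prob_space (?M k)" if "k \<in> {..<length js}" for k
    using that assms by (intro prob_space_density_me) auto
  interpret prob_space "me_product js"
    using assms(2) by (rule prob_space_me_product)
  have "indep_vars ?M (\<lambda>k x. x k) {..<length js}"
    using assms M by (intro indep_vars_PiM_components) auto
  then have "indep_vars (\<lambda>_. borel) (\<lambda>k x. x k) {..<length js}"
    by (rule indep_vars_compose2[where Y = "\<lambda>_ x. x", simplified]) (simp add: measurable_ident_sets)
  moreover have "distributed (me_product js) lborel (\<lambda>x. x k) (\<lambda>x. ennreal (me (js ! k) x))"
    if "k < length js" for k
  proof -
    have "distr (me_product js) lborel (\<lambda>x. x k) = distr (me_product js) (?M k) (\<lambda>x. x k)"
      by (rule distr_cong) auto
    also have "\<dots> = ?M k"
      using M that by (intro distr_PiM_component) auto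
    finally show ?thesis
      unfolding distributed_def using that assms
      by (auto intro!: measurable_compose[OF borel_measurable_me measurable_ennreal] measurable_PiM_component_rev)
  qed
  ultimately show ?thesis
    using distributed_sum_block_me[OF prob_space_axioms _ assms, of _ "{..<length js}" 0]
    by (simp add: atLeast0LessThan)
qed

lemma nn_integral_block_me:
  assumes "js \<noteq> []" and "set js \<subseteq> V"
  shows "(\<integral>\<^sup>+y. ennreal (block_me js y) \<partial>lborel) = 1"
proof -
  note sum_distributed = distributed_sum_me_product[OF assms]
  from prob_space.prob_space_distr[OF prob_space_me_product distributed_measurable[OF sum_distributed]]
  have "prob_space (density lborel (\<lambda>y. ennreal (block_me js y)))"
    using assms by (simp add: distributed_distr_eq_density[OF sum_distributed])
  then show ?thesis
    using borel_measurable_block_me[OF assms]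
    by (auto dest: prob_space.emeasure_space_1 simp: emeasure_density)
qed

lemma integrable_block_me: "js \<noteq> [] \<Longrightarrow> set js \<subseteq> V \<Longrightarrow> integrable lborel (block_me js)"
  using borel_measurable_block_me block_me_nonneg nn_integral_block_me
  by (intro integrableI_nonneg) auto

lemma me_density_block_me:
  assumes "js \<noteq> []" and "set js \<subseteq> V"
  shows "me_density (block_me js)"
proof -
  have "(\<integral>\<^sup>+y. ennreal (block_me js y) \<partial>lborel) = ennreal 1"
    using nn_integral_block_me[OF assms] by simp
  then have "(block_me js has_integral 1) UNIV"
    using borel_measurable_block_me[OF assms] block_me_nonneg[OF assms] by (intro nn_integral_has_integral) auto
  moreover have "(\<lambda>x. if x \<in> {0..} then block_me js x else 0) = block_me js"
    by (auto simp: me_fun_neg)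
  ultimately have "(block_me js has_integral 1) {0..}"
    using has_integral_restrict_UNIV[where s = "{0..}" and f = "block_me js"] by simp
  then show ?thesis
    unfolding me_density_def using block_carriers[OF assms] block_me_nonneg[OF assms] by blast
qed

lemma me_product_eq_density:
  assumes "set js \<subseteq> V"
  shows "me_product js = density (PiM {..<length js} (\<lambda>_. lborel))
    (\<lambda>x. ennreal (\<Prod>k<length js. me (js ! k) (x k)))"
proof -
  have V: "js ! k \<in> V" if "k < length js" for k
    using assms that by auto
  then have "me_product js = density (PiM {..<length js} (\<lambda>_. lborel))
      (\<lambda>x. \<Prod>k<length js. ennreal (me (js ! k) (x k)))"
    by (intro PiM_density_lborel) (auto intro: borel_measurable_me)
  also have "(\<lambda>x. \<Prod>k<length js. ennreal (me (js ! k) (x k))) = (\<lambda>x. ennreal (\<Prod>k<length js. me (js ! k) (x k)))"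
    by (intro ext prod_ennreal) (auto intro: me_nonneg V)
  finally show ?thesis .
qed

lemma integral_prod_me_mult_indicator_sum:
  assumes "js \<noteq> []" and "set js \<subseteq> V" and "A \<in> sets borel"
  shows "integrable (PiM {..<length js} (\<lambda>_. lborel))
      (\<lambda>x. (\<Prod>k<length js. me (js ! k) (x k)) * indicator A (\<Sum>k<length js. x k))"
    and "(\<integral>x. (\<Prod>k<length js. me (js ! k) (x k)) * indicator A (\<Sum>k<length js. x k) \<partial>PiM {..<length js} (\<lambda>_. lborel))
      = (\<integral>y. block_me js y * indicator A y \<partial>lborel)"
proof -
  let ?L = "PiM {..<length js} (\<lambda>_. lborel :: real measure)"
  let ?F = "\<lambda>x. \<Prod>k<length js. me (js ! k) (x k)"
  let ?g = "\<lambda>x. indicator A (\<Sum>k<length js. x k) :: real"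
  interpret prob_space "me_product js"
    using assms(2) by (rule prob_space_me_product)
  have "js ! k \<in> V" if "k < length js" for k
    using assms(2) that by auto
  then have F: "?F \<in> borel_measurable ?L" "AE x in ?L. 0 \<le> ?F x"
    by (auto intro!: borel_measurable_prod measurable_PiM_component_rev borel_measurable_me
        AE_I2 prod_nonneg me_nonneg)
  have g: "?g \<in> borel_measurable ?L"
    using assms(3) by measurable
  have "integrable (me_product js) ?g"
    using g by (intro integrable_const_bound[where B = 1]) (auto cong: measurable_cong_sets sets_PiM_cong)
  then show "integrable ?L (\<lambda>x. ?F x * ?g x)"
    unfolding me_product_eq_density[OF assms(2)] by (simp add: integrable_real_density F g)
  have "(\<integral>y. block_me js y * indicator A y \<partial>lborel) = (\<integral>x. ?g x \<partial>me_product js)"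
    using assms by (intro distributed_integral[OF distributed_sum_me_product]) (auto simp: block_me_nonneg)
  also have "\<dots> = (\<integral>x. ?F x * ?g x \<partial>?L)"
    unfolding me_product_eq_density[OF assms(2)] by (simp add: integral_real_density F g)
  finally show "(\<integral>x. ?F x * ?g x \<partial>?L) = (\<integral>y. block_me js y * indicator A y \<partial>lborel)" ..
qed

lemma prod_mixture_nonneg:
  assumes "\<And>x. (\<forall>k<m. 0 \<le> x k) \<Longrightarrow> 0 \<le> (\<Sum>js\<in>S. p js * (\<Prod>k<m. me (js ! k) (x k)))"
  shows "0 \<le> (\<Sum>js\<in>S. p js * (\<Prod>k<m. me (js ! k) (x k)))"
proof (cases "\<forall>k<m. 0 \<le> x k")
  case False
  then obtain k where "k < m" and "x k < 0"
    by (auto simp: not_le)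
  then have vanish: "(\<Prod>k<m. me (js ! k) (x k)) = 0" for js
    by (intro prod_zero bexI[of _ k]) (simp_all add: me_fun_neg)
  show ?thesis
    unfolding vanish by simp
qed (rule assms)

lemma integral_mixture_mult_indicator_sum:
  assumes "finite S" and S: "\<And>js. js \<in> S \<Longrightarrow> js \<noteq> [] \<and> set js \<subseteq> V \<and> length js = m"
    and "A \<in> sets borel"
  shows "(\<integral>x. (\<Sum>js\<in>S. p js * (\<Prod>k<m. me (js ! k) (x k))) * indicator A (\<Sum>k<m. x k) \<partial>PiM {..<m} (\<lambda>_. lborel))
    = (\<integral>y. (\<Sum>js\<in>S. p js * block_me js y) * indicator A y \<partial>lborel)"
proof -
  let ?L = "PiM {..<m} (\<lambda>_. lborel :: real measure)"
  let ?F = "\<lambda>js x. (\<Prod>k<m. me (js ! k) (x k)) * indicator A (\<Sum>k<m. x k)"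
  have integrable: "integrable ?L (?F js)"
    and integral_eq: "(\<integral>x. ?F js x \<partial>?L) = (\<integral>y. block_me js y * indicator A y \<partial>lborel)"
    if "js \<in> S" for js
    using S[OF that] integral_prod_me_mult_indicator_sum[of js A] \<open>A \<in> sets borel\<close> by auto
  have "(\<integral>x. (\<Sum>js\<in>S. p js * (\<Prod>k<m. me (js ! k) (x k))) * indicator A (\<Sum>k<m. x k) \<partial>?L)
      = (\<integral>x. (\<Sum>js\<in>S. p js * ?F js x) \<partial>?L)"
    by (simp add: sum_distrib_right mult.assoc)
  also have "\<dots> = (\<Sum>js\<in>S. p js * (\<integral>y. block_me js y * indicator A y \<partial>lborel))"
    using integrable integral_eq by (subst Bochner_Integration.integral_sum) auto
  also have "\<dots> = (\<integral>y. (\<Sum>js\<in>S. p js * (block_me js y * indicator A y)) \<partial>lborel)"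
    using S integrable_block_me \<open>A \<in> sets borel\<close>
    by (subst Bochner_Integration.integral_sum) (auto intro!: integrable_real_mult_indicator)
  also have "\<dots> = (\<integral>y. (\<Sum>js\<in>S. p js * block_me js y) * indicator A y \<partial>lborel)"
    by (simp add: sum_distrib_right mult.assoc)
  finally show ?thesis .
qed

lemma integrable_block_mixture:
  assumes "finite S" and "\<And>js. js \<in> S \<Longrightarrow> js \<noteq> [] \<and> set js \<subseteq> V"
  shows "integrable lborel (\<lambda>y. \<Sum>js\<in>S. p js * block_me js y)"
  using assms by (intro Bochner_Integration.integrable_sum integrable_mult_right integrable_block_me) auto

lemma block_mixture_nonneg:
  assumes "finite S" and S: "\<And>js. js \<in> S \<Longrightarrow> js \<noteq> [] \<and> set js \<subseteq> V \<and> length js = m"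
    and prod_mixture_nonneg: "\<And>x. 0 \<le> (\<Sum>js\<in>S. p js * (\<Prod>k<m. me (js ! k) (x k)))"
  shows "0 \<le> (\<Sum>js\<in>S. p js * block_me js y)"
proof (cases "0 \<le> y")
  case True
  have "continuous_on {y..} (block_me js)" if "js \<in> S" for js
    using S[OF that] True by (intro continuous_on_subset[OF continuous_on_block_me]) auto
  then have "continuous_on {y..} (\<lambda>y. \<Sum>js\<in>S. p js * block_me js y)"
    by (auto intro!: continuous_on_sum continuous_on_mult continuous_on_const)
  then show ?thesis
  proof (rule nonneg_if_interval_integrals_nonneg)
    fix d :: real
    have "0 \<le> (\<integral>x. (\<Sum>js\<in>S. p js * (\<Prod>k<m. me (js ! k) (x k))) * indicator {y..y + d} (\<Sum>k<m. x k)
        \<partial>PiM {..<m} (\<lambda>_. lborel))"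
      using prod_mixture_nonneg by (intro Bochner_Integration.integral_nonneg) simp
    then show "0 \<le> (\<integral>x. (\<Sum>js\<in>S. p js * block_me js x) * indicator {y..y + d} x \<partial>lborel)"
      using integral_mixture_mult_indicator_sum[OF \<open>finite S\<close> S] by simp
  qed
qed (simp add: me_fun_neg)

lemma distributed_sum_block_mixture:
  assumes "prob_space P" and "finite S" and S: "\<And>js. js \<in> S \<Longrightarrow> js \<noteq> [] \<and> set js \<subseteq> V \<and> length js = m"
    and X: "distributed P (PiM {..<m} (\<lambda>_. lborel)) X
      (\<lambda>x. ennreal (\<Sum>js\<in>S. p js * (\<Prod>k<m. me (js ! k) (x k))))"
    and prod_mixture_nonneg: "\<And>x. 0 \<le> (\<Sum>js\<in>S. p js * (\<Prod>k<m. me (js ! k) (x k)))"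
  shows "distributed P lborel (\<lambda>\<omega>. \<Sum>k<m. X \<omega> k) (\<lambda>y. ennreal (\<Sum>js\<in>S. p js * block_me js y))"
proof (rule distributed_if_integral_indicator_eq[OF \<open>prob_space P\<close> X prod_mixture_nonneg])
  show "integrable lborel (\<lambda>y. \<Sum>js\<in>S. p js * block_me js y)"
    using \<open>finite S\<close> S by (intro integrable_block_mixture) auto
  then show "(\<lambda>y. \<Sum>js\<in>S. p js * block_me js y) \<in> borel_measurable borel"
    by (simp add: borel_measurable_integrable)
  show "0 \<le> (\<Sum>js\<in>S. p js * block_me js y)" for y
    using \<open>finite S\<close> S prod_mixture_nonneg by (rule block_mixture_nonneg)
qed (use integral_mixture_mult_indicator_sum[OF \<open>finite S\<close> S] in simp_all)

end

theorem theorem10: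
  fixes L M :: nat
    and al :: "nat \<Rightarrow> real vec" and Tm :: "nat \<Rightarrow> real mat" and tv :: "nat \<Rightarrow> real vec"
    and n :: "nat \<Rightarrow> nat"
    and p :: "nat list \<Rightarrow> real"
    and Pr :: "'a measure" and X :: "'a \<Rightarrow> nat \<Rightarrow> real"
    and f :: "(nat \<Rightarrow> real) \<Rightarrow> real"
  assumes "L \<ge> 1" and "M \<ge> 1"
    and dims: "\<And>j. j \<in> {1..L} \<Longrightarrow>
                 al j \<in> carrier_vec (n j) \<and> Tm j \<in> carrier_mat (n j) (n j) \<and> tv j \<in> carrier_vec (n j)"
    and ME: "\<And>j. j \<in> {1..L} \<Longrightarrow> me_density (me_fun (al j) (Tm j) (tv j))"
    and psum: "(\<Sum>is\<in>{is. length is = M \<and> set is \<subseteq> {1..L}}. p is) = 1"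
    and f_def: "\<And>x. f x = (\<Sum>is\<in>{is. length is = M \<and> set is \<subseteq> {1..L}}.
                   p is * (\<Prod>k<M. me_fun (al (is ! k)) (Tm (is ! k)) (tv (is ! k)) (x k)))"
    and f_nonneg: "\<And>x. (\<forall>k<M. 0 \<le> x k) \<Longrightarrow> 0 \<le> f x"
    and "prob_space Pr"
    and dist: "distributed Pr (PiM {0..<M} (\<lambda>_. lborel)) X (\<lambda>x. ennreal (f x))"
  shows "MEam (\<lambda>y. \<Sum>is\<in>{is. length is = M \<and> set is \<subseteq> {1..L}}.
                   p is * me_fun (big_alpha al Tm is) (big_T al Tm tv is) (big_t tv Tm is) y)
       \<and> distributed Pr lborel (\<lambda>\<omega>. \<Sum>j<M. X \<omega> j)
           (\<lambda>y. ennreal (\<Sum>is\<in>{is. length is = M \<and> set is \<subseteq> {1..L}}.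
                   p is * me_fun (big_alpha al Tm is) (big_T al Tm tv is) (big_t tv Tm is) y))"
proof -
  interpret me_family al Tm tv n "{1..L}"
    using dims ME by unfold_locales auto
  let ?S = "{is. length is = M \<and> set is \<subseteq> {1..L}}"
  have "finite ?S"
    using finite_lists_length_eq[of "{1..L}" M] by (simp add: conj_commute)
  have S: "is \<noteq> [] \<and> set is \<subseteq> {1..L} \<and> length is = M" if "is \<in> ?S" for "is"
    using that \<open>M \<ge> 1\<close> by auto
  have f_nonneg_everywhere: "0 \<le> f x" for x
    unfolding f_def using f_nonneg[unfolded f_def] by (rule prod_mixture_nonneg)
  have "distributed Pr lborel (\<lambda>\<omega>. \<Sum>j<M. X \<omega> j) (\<lambda>y. ennreal (\<Sum>is\<in>?S. p is * block_me is y))"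
    using \<open>prob_space Pr\<close> \<open>finite ?S\<close> S dist f_nonneg_everywhere
    unfolding f_def atLeast0LessThan by (rule distributed_sum_block_mixture)
  moreover have "MEam (\<lambda>y. \<Sum>is\<in>?S. p is * block_me is y)"
  proof (rule MEam_finite_mixture[OF \<open>finite ?S\<close> _ psum])
    show "me_density (block_me is)" if "is \<in> ?S" for "is"
      using S[OF that] by (intro me_density_block_me) auto
    show "0 \<le> (\<Sum>is\<in>?S. p is * block_me is y)" for y
      using \<open>finite ?S\<close> S f_nonneg_everywhere[unfolded f_def] by (rule block_mixture_nonneg)
  qed
  ultimately show ?thesis
    by simp
qed

end
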